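(* Let $G$ be a locally compact group acting without inversions on a locally finite regular tree $T$, and let $L$ be a geodesic line in $T$ satisfying: (i) for every geodesic segment $[x,y]$ of finite length in $T$ there exists $g\in G$ with $[gx,gy]\subset L$; (ii) the set-wise stabilizer $H$ of $L$ in $G$ acts transitively on the geometric edges of $L$. Then for every $n\ge 0$, restriction to $L^{n+1}$ induces an isomorphism $$\ell^\infty_{\mathcal A}(T^{n+1},\mathbb{R})^G\;\xrightarrow{\ \cong\ }\;\ell^\infty_{\mathrm{alt}}(L^{n+1},\mathbb{R})^H .$$
   Context: Identify $T$ and $L$ with their vertex sets. A tuple $(x_0,\ldots,x_n)$ of vertices is aligned if all $x_i$ lie on a common geodesic segment of $T$. $\ell^\infty_{\mathcal A}(T^{n+1},\mathbb{R})$ denotes the space of bounded alternating functions $T^{n+1}\to\mathbb{R}$ (i.e. $f(x_{\sigma(0)},\ldots,x_{\sigma(n)})=\mathrm{sgn}(\sigma)f(x_0,\ldots,x_n)$) supported on aligned tuples; $\ell^\infty_{\mathrm{alt}}(L^{n+1},\mathbb{R})$ denotes bounded alternating functions on $L^{n+1}$. The superscripts $G$, $H$ denote invariants under the diagonal action. "Without inversions" means no element swaps the endpoints of an edge. *)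

theory Defs
  imports Complex_Main "HOL-Algebra.Group" "HOL-Combinatorics.Permutations"
begin

definition is_path :: "('v \<Rightarrow> 'v \<Rightarrow> bool) \<Rightarrow> 'v list \<Rightarrow> 'v \<Rightarrow> 'v \<Rightarrow> bool" where
  "is_path E p x y \<longleftrightarrow> p \<noteq> [] \<and> hd p = x \<and> last p = y \<and> distinct p \<and>
     (\<forall>i. Suc i < length p \<longrightarrow> E (p ! i) (p ! Suc i))"

definition is_tree :: "'v set \<Rightarrow> ('v \<Rightarrow> 'v \<Rightarrow> bool) \<Rightarrow> bool" where
  "is_tree V E \<longleftrightarrow> (\<forall>x y. E x y \<longrightarrow> x \<in> V \<and> y \<in> V \<and> E y x \<and> x \<noteq> y) \<and>
     (\<forall>x\<in>V. \<forall>y\<in>V. \<exists>!p. is_path E p x y)"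

definition locally_finite_regular :: "'v set \<Rightarrow> ('v \<Rightarrow> 'v \<Rightarrow> bool) \<Rightarrow> bool" where
  "locally_finite_regular V E \<longleftrightarrow>
     (\<forall>v\<in>V. finite {w. E v w}) \<and> (\<exists>d. \<forall>v\<in>V. card {w. E v w} = d)"

text \<open>Vertex set of the geodesic segment [x,y] (the unique simple path).\<close>
definition segment :: "('v \<Rightarrow> 'v \<Rightarrow> bool) \<Rightarrow> 'v \<Rightarrow> 'v \<Rightarrow> 'v set" where
  "segment E x y = \<Union> {set p | p. is_path E p x y}"

definition geodesic_line :: "'v set \<Rightarrow> ('v \<Rightarrow> 'v \<Rightarrow> bool) \<Rightarrow> (int \<Rightarrow> 'v) \<Rightarrow> bool" where
  "geodesic_line V E l \<longleftrightarrow> inj l \<and> range l \<subseteq> V \<and> (\<forall>i. E (l i) (l (i + 1)))"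

definition tree_action :: "('g, 'b) monoid_scheme \<Rightarrow> 'v set \<Rightarrow> ('v \<Rightarrow> 'v \<Rightarrow> bool)
    \<Rightarrow> ('g \<Rightarrow> 'v \<Rightarrow> 'v) \<Rightarrow> bool" where
  "tree_action G V E phi \<longleftrightarrow> group G \<and>
     (\<forall>g\<in>carrier G. bij_betw (phi g) V V \<and> (\<forall>x\<in>V. \<forall>y\<in>V. E (phi g x) (phi g y) \<longleftrightarrow> E x y)) \<and>
     (\<forall>x\<in>V. phi \<one>\<^bsub>G\<^esub> x = x) \<and>
     (\<forall>g\<in>carrier G. \<forall>h\<in>carrier G. \<forall>x\<in>V. phi (g \<otimes>\<^bsub>G\<^esub> h) x = phi g (phi h x))"

definition without_inversions :: "('g, 'b) monoid_scheme \<Rightarrow> ('v \<Rightarrow> 'v \<Rightarrow> bool)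
    \<Rightarrow> ('g \<Rightarrow> 'v \<Rightarrow> 'v) \<Rightarrow> bool" where
  "without_inversions G E phi \<longleftrightarrow>
     \<not> (\<exists>g\<in>carrier G. \<exists>x y. E x y \<and> phi g x = y \<and> phi g y = x)"

definition setwise_stabilizer :: "('g, 'b) monoid_scheme \<Rightarrow> ('g \<Rightarrow> 'v \<Rightarrow> 'v) \<Rightarrow> 'v set \<Rightarrow> 'g set" where
  "setwise_stabilizer G phi L = {g \<in> carrier G. phi g ` L = L}"

text \<open>Functions on (n+1)-tuples of elements of X are represented as functions on lists,
  vanishing off the set of lists of length n+1 with entries in X.\<close>
definition tuples :: "nat \<Rightarrow> 'v set \<Rightarrow> 'v list set" where
  "tuples n X = {xs. length xs = Suc n \<and> set xs \<subseteq> X}"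

definition bounded_fun :: "('a \<Rightarrow> real) \<Rightarrow> bool" where
  "bounded_fun f \<longleftrightarrow> (\<exists>C. \<forall>x. \<bar>f x\<bar> \<le> C)"

definition alternating :: "nat \<Rightarrow> 'v set \<Rightarrow> ('v list \<Rightarrow> real) \<Rightarrow> bool" where
  "alternating n X f \<longleftrightarrow> (\<forall>xs\<in>tuples n X. \<forall>\<sigma>. \<sigma> permutes {..<Suc n} \<longrightarrow>
      f (map (\<lambda>i. xs ! \<sigma> i) [0..<Suc n]) = of_int (sign \<sigma>) * f xs)"

definition aligned :: "('v \<Rightarrow> 'v \<Rightarrow> bool) \<Rightarrow> 'v set \<Rightarrow> 'v list \<Rightarrow> bool" where
  "aligned E V xs \<longleftrightarrow> (\<exists>a\<in>V. \<exists>b\<in>V. set xs \<subseteq> segment E a b)"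

definition invariant :: "nat \<Rightarrow> 'v set \<Rightarrow> 'g set \<Rightarrow> ('g \<Rightarrow> 'v \<Rightarrow> 'v) \<Rightarrow> ('v list \<Rightarrow> real) \<Rightarrow> bool" where
  "invariant n X H phi f \<longleftrightarrow> (\<forall>h\<in>H. \<forall>xs\<in>tuples n X. f (map (phi h) xs) = f xs)"

definition linf_aligned_inv :: "nat \<Rightarrow> 'v set \<Rightarrow> ('v \<Rightarrow> 'v \<Rightarrow> bool) \<Rightarrow> 'g set
    \<Rightarrow> ('g \<Rightarrow> 'v \<Rightarrow> 'v) \<Rightarrow> ('v list \<Rightarrow> real) set" where
  "linf_aligned_inv n V E G phi = {f. (\<forall>xs. xs \<notin> tuples n V \<longrightarrow> f xs = 0) \<and> bounded_fun f \<and>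
      alternating n V f \<and> (\<forall>xs\<in>tuples n V. f xs \<noteq> 0 \<longrightarrow> aligned E V xs) \<and> invariant n V G phi f}"

definition linf_alt_inv :: "nat \<Rightarrow> 'v set \<Rightarrow> 'g set
    \<Rightarrow> ('g \<Rightarrow> 'v \<Rightarrow> 'v) \<Rightarrow> ('v list \<Rightarrow> real) set" where
  "linf_alt_inv n L H phi = {f. (\<forall>xs. xs \<notin> tuples n L \<longrightarrow> f xs = 0) \<and> bounded_fun f \<and>
      alternating n L f \<and> invariant n L H phi f}"

definition restrict_tuples :: "nat \<Rightarrow> 'v set \<Rightarrow> ('v list \<Rightarrow> real) \<Rightarrow> ('v list \<Rightarrow> real)" where
  "restrict_tuples n L f = (\<lambda>xs. if xs \<in> tuples n L then f xs else 0)"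

end

theory Submission
  imports Defs
begin

text \<open>
  By (i) every aligned tuple of vertices can be moved into \<open>L\<close> by an element of \<open>G\<close>, so a
  \<open>G\<close>-invariant function supported on aligned tuples is determined by its restriction to \<open>L\<close>.
  Conversely an \<open>H\<close>-invariant function \<open>F\<close> on \<open>L\<close> extends by \<open>F (g x)\<close> for any \<open>g\<close> moving
  \<open>x\<close> into \<open>L\<close>. This is well defined because whenever \<open>k \<in> G\<close> maps a finite subset of \<open>L\<close>
  into \<open>L\<close>, some \<open>h \<in> H\<close> agrees with \<open>k\<close> on it: on the segment of \<open>L\<close> spanned by the subset,
  \<open>k\<close> acts as an affine map of \<open>\<int>\<close>; by (ii) some \<open>h \<in> H\<close> maps the first edge of the segment
  onto its \<open>k\<close>-image, with the same orientation since otherwise \<open>h\<inverse>k\<close> would be an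
  inversion; and affine maps agreeing on an edge agree on the segment.
\<close>

lemma int_unit_steps_affine:
  fixes \<psi> :: "int \<Rightarrow> int"
  assumes steps: "\<And>i. a \<le> i \<Longrightarrow> i < b \<Longrightarrow> \<bar>\<psi> (i + 1) - \<psi> i\<bar> = 1"
    and inj: "inj_on \<psi> {a..b}"
    and i: "i \<in> {a..b}"
  shows "\<psi> i = \<psi> a + (\<psi> (a + 1) - \<psi> a) * (i - a)"
proof -
  define d where "d = \<psi> (a + 1) - \<psi> a"
  have const_step: "j < b \<longrightarrow> \<psi> (j + 1) - \<psi> j = d" if "a \<le> j" for j
    using that
  proof (induction j rule: int_ge_induct)
    case base then show ?case by (simp add: d_def)
  next
    case (step j)
    show ?case
    proof
      assume "j + 1 < b"
      have "\<psi> (j + 1 + 1) \<noteq> \<psi> j"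
        using inj_onD[OF inj, of "j + 1 + 1" j] step.hyps \<open>j + 1 < b\<close> by auto
      moreover have "\<psi> (j + 1) - \<psi> j = d" using step.IH \<open>j + 1 < b\<close> by simp
      moreover have "\<bar>\<psi> (j + 1) - \<psi> j\<bar> = 1" "\<bar>\<psi> (j + 1 + 1) - \<psi> (j + 1)\<bar> = 1"
        using steps[of j] steps[of "j + 1"] step.hyps \<open>j + 1 < b\<close> by simp_all
      ultimately show "\<psi> (j + 1 + 1) - \<psi> (j + 1) = d" by arith
    qed
  qed
  have affine: "j \<le> b \<longrightarrow> \<psi> j = \<psi> a + d * (j - a)" if "a \<le> j" for j
    using that
  proof (induction j rule: int_ge_induct)
    case (step j)
    show ?case
    proof
      assume "j + 1 \<le> b"
      then have "\<psi> (j + 1) = \<psi> j + d" and "\<psi> j = \<psi> a + d * (j - a)"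
        using step const_step[of j] by simp_all
      moreover have "d * (j + 1 - a) = d * (j - a) + d" by (simp add: algebra_simps)
      ultimately show "\<psi> (j + 1) = \<psi> a + d * (j + 1 - a)" by linarith
    qed
  qed simp
  from i have "\<psi> i = \<psi> a + d * (i - a)" using affine[of i] by simp
  then show ?thesis unfolding d_def .
qed

lemma tuple_permutation_eq_permute_list:
  "xs \<in> tuples n X \<Longrightarrow> map (\<lambda>i. xs ! \<sigma> i) [0..<Suc n] = permute_list \<sigma> xs"
  by (simp add: tuples_def permute_list_def)

lemma alternating_iff_permute_list:
  "alternating n X f \<longleftrightarrow> (\<forall>xs\<in>tuples n X. \<forall>\<sigma>. \<sigma> permutes {..<Suc n} \<longrightarrow>
     f (permute_list \<sigma> xs) = of_int (sign \<sigma>) * f xs)"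
  unfolding alternating_def by (simp add: tuple_permutation_eq_permute_list del: upt_Suc)

lemma bounded_fun_if_zero:
  assumes "bounded_fun f"
  shows "bounded_fun (\<lambda>x. if P x then f (h x) else 0)"
proof -
  obtain C where C: "\<And>x. \<bar>f x\<bar> \<le> C" using assms unfolding bounded_fun_def by blast
  then have "0 \<le> C" by (meson abs_ge_zero order_trans)
  then show ?thesis using C unfolding bounded_fun_def by (intro exI[of _ C]) simp
qed

lemma permute_list_in_tuples:
  assumes "xs \<in> tuples n X" "\<sigma> permutes {..<Suc n}"
  shows "permute_list \<sigma> xs \<in> tuples n X"
  using assms set_permute_list[of \<sigma> xs] unfolding tuples_def by simp

lemma aligned_cong_set: "set xs = set ys \<Longrightarrow> aligned E V xs \<longleftrightarrow> aligned E V ys"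
  unfolding aligned_def by simp

locale tree_graph =
  fixes V :: "'v set" and E :: "'v \<Rightarrow> 'v \<Rightarrow> bool"
  assumes tree: "is_tree V E"
begin

lemma adjacent_in_V: "E x y \<Longrightarrow> x \<in> V \<and> y \<in> V"
  and adjacent_sym: "E x y \<Longrightarrow> E y x"
  and adjacent_neq: "E x y \<Longrightarrow> x \<noteq> y"
  using tree unfolding is_tree_def by blast+

lemma path_exists_unique: "x \<in> V \<Longrightarrow> y \<in> V \<Longrightarrow> \<exists>!p. is_path E p x y"
  using tree unfolding is_tree_def by blast

lemma path_in_V:
  assumes p: "is_path E p x y" and x: "x \<in> V"
  shows "set p \<subseteq> V"
proof
  fix z assume "z \<in> set p"
  then obtain i where i: "i < length p" "p ! i = z" by (auto simp: in_set_conv_nth)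
  show "z \<in> V"
  proof (cases i)
    case 0
    then show ?thesis using p i x unfolding is_path_def by (metis hd_conv_nth)
  next
    case (Suc k)
    then have "E (p ! k) (p ! Suc k)" using p i unfolding is_path_def by auto
    then show ?thesis using adjacent_in_V Suc i by blast
  qed
qed

lemma segment_path: "x \<in> V \<Longrightarrow> y \<in> V \<Longrightarrow> is_path E p x y \<Longrightarrow> segment E x y = set p"
  unfolding segment_def using path_exists_unique by blast

lemma path_rev:
  assumes p: "is_path E p x y"
  shows "is_path E (rev p) y x"
  unfolding is_path_def
proof (intro conjI allI impI)
  fix i assume i: "Suc i < length (rev p)"
  define k where "k = length p - Suc (Suc i)"
  have "length p - Suc i = Suc k" using i unfolding k_def by simp
  then have "rev p ! i = p ! Suc k" "rev p ! Suc i = p ! k"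
    using i by (simp_all add: rev_nth k_def)
  moreover have "E (p ! k) (p ! Suc k)" using p i unfolding is_path_def k_def by auto
  ultimately show "E (rev p ! i) (rev p ! Suc i)" using adjacent_sym by simp
next
  show "rev p \<noteq> []" using p unfolding is_path_def by simp
  show "hd (rev p) = y" using p unfolding is_path_def by (simp add: hd_rev)
  show "last (rev p) = x" using p unfolding is_path_def by (simp add: last_rev)
  show "distinct (rev p)" using p unfolding is_path_def by simp
qed

lemma segment_sym: "x \<in> V \<Longrightarrow> y \<in> V \<Longrightarrow> segment E x y = segment E y x"
  using path_exists_unique segment_path path_rev by (metis set_rev)

end

locale tree_line = tree_graph +
  fixes l :: "int \<Rightarrow> 'v"
  assumes line: "geodesic_line V E l"
begin

lemma line_in_V: "l i \<in> V"
  and line_adjacent_succ: "E (l i) (l (i + 1))"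
  and line_inj: "inj l"
  using line unfolding geodesic_line_def by blast+

lemma line_eq_iff [simp]: "l i = l j \<longleftrightarrow> i = j"
  using line_inj by (auto dest: injD)

lemma line_walk_path:
  assumes "a \<le> b"
  shows "is_path E (map l [a..b]) (l a) (l b)"
  unfolding is_path_def
proof (intro conjI allI impI)
  show "hd (map l [a..b]) = l a" using assms by (simp add: upto_rec1)
  show "last (map l [a..b]) = l b" using assms by (simp add: upto_rec2)
  show "distinct (map l [a..b])" by (simp add: distinct_map inj_on_def)
  fix i assume "Suc i < length (map l [a..b])"
  then have "a + int (Suc i) \<le> b" by simp
  then show "E (map l [a..b] ! i) (map l [a..b] ! Suc i)"
    using line_adjacent_succ[of "a + int i"] by (simp add: algebra_simps)
qed (use assms in simp)

lemma segment_line: "segment E (l a) (l b) = l ` {min a b..max a b}"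
proof -
  have ordered: "segment E (l a) (l b) = l ` {a..b}" if "a \<le> b" for a b
    using segment_path[OF line_in_V line_in_V line_walk_path[OF that]] by simp
  show ?thesis
  proof (cases "a \<le> b")
    case False
    then show ?thesis using ordered[of b a] segment_sym[OF line_in_V line_in_V, of a b] by simp
  qed (simp add: ordered)
qed

lemma line_adjacent:
  assumes e: "E (l p) (l q)"
  shows "\<bar>p - q\<bar> = 1"
proof -
  have "p \<noteq> q" using adjacent_neq[OF e] by auto
  have "is_path E [l p, l q] (l p) (l q)"
    using e \<open>p \<noteq> q\<close> unfolding is_path_def by (auto simp: less_Suc_eq)
  then have "l ` {p, q} = l ` {min p q..max p q}"
    using segment_path[OF line_in_V line_in_V] segment_line by simp
  then have "{p, q} = {min p q..max p q}" by (rule inj_image_eq_iff[OF line_inj, THEN iffD1])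
  moreover have "min p q + 1 \<in> {min p q..max p q}" using \<open>p \<noteq> q\<close> by auto
  ultimately have "min p q + 1 \<in> {p, q}" by (simp only:)
  then show ?thesis by (cases "p < q") auto
qed

end

locale tree_group_action = tree_graph V E + group G
  for V :: "'v set" and E :: "'v \<Rightarrow> 'v \<Rightarrow> bool" and G :: "('g, 'b) monoid_scheme" (structure) +
  fixes phi :: "'g \<Rightarrow> 'v \<Rightarrow> 'v"
  assumes act: "tree_action G V E phi"
begin

lemma action_in_V: "g \<in> carrier G \<Longrightarrow> x \<in> V \<Longrightarrow> phi g x \<in> V"
  and action_inj_on: "g \<in> carrier G \<Longrightarrow> inj_on (phi g) V"
  and action_adjacent_iff: "g \<in> carrier G \<Longrightarrow> x \<in> V \<Longrightarrow> y \<in> V \<Longrightarrow> E (phi g x) (phi g y) \<longleftrightarrow> E x y"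
  and action_one: "x \<in> V \<Longrightarrow> phi \<one> x = x"
  and action_mult: "g \<in> carrier G \<Longrightarrow> h \<in> carrier G \<Longrightarrow> x \<in> V \<Longrightarrow> phi (g \<otimes> h) x = phi g (phi h x)"
  using act unfolding tree_action_def bij_betw_def by blast+

lemma action_eq_iff: "g \<in> carrier G \<Longrightarrow> x \<in> V \<Longrightarrow> y \<in> V \<Longrightarrow> phi g x = phi g y \<longleftrightarrow> x = y"
  using action_inj_on by (auto dest: inj_onD)

lemma action_mult_inv_cancel:
  "g \<in> carrier G \<Longrightarrow> h \<in> carrier G \<Longrightarrow> x \<in> V \<Longrightarrow> phi (h \<otimes> inv g) (phi g x) = phi h x"
  using action_mult[of "inv g" g x] action_mult[of h "inv g" "phi g x"] action_one action_in_V
  by (simp add: m_assoc[symmetric])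

lemma action_inv_cancel: "g \<in> carrier G \<Longrightarrow> x \<in> V \<Longrightarrow> phi (inv g) (phi g x) = x"
  using action_mult_inv_cancel[of g \<one> x] action_one by simp

lemma path_image:
  assumes g: "g \<in> carrier G" and p: "is_path E p x y" and x: "x \<in> V"
  shows "is_path E (map (phi g) p) (phi g x) (phi g y)"
proof -
  have pV: "set p \<subseteq> V" using path_in_V[OF p x] .
  then have "\<forall>i<length p. p ! i \<in> V" by auto
  then show ?thesis
    using p inj_on_subset[OF action_inj_on[OF g] pV] action_adjacent_iff[OF g]
    unfolding is_path_def by (auto simp: hd_map last_map distinct_map)
qed

lemma segment_image:
  assumes g: "g \<in> carrier G" and x: "x \<in> V" and y: "y \<in> V"
  shows "phi g ` segment E x y = segment E (phi g x) (phi g y)"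
proof -
  obtain p where p: "is_path E p x y" using path_exists_unique[OF x y] by blast
  have "segment E (phi g x) (phi g y) = set (map (phi g) p)"
    using segment_path[OF action_in_V[OF g x] action_in_V[OF g y] path_image[OF g p x]] .
  then show ?thesis using segment_path[OF x y p] by simp
qed

lemma stabilizer_subgroup:
  assumes L: "L \<subseteq> V"
  shows "subgroup (setwise_stabilizer G phi L) G"
proof (rule subgroupI)
  have image_mult: "phi (g \<otimes> h) ` L = phi g ` phi h ` L" if "g \<in> carrier G" "h \<in> carrier G" for g h
    using action_mult[OF that] L by (force simp: image_image)
  have image_one: "phi \<one> ` L = L"
    using action_one L by (simp add: subset_iff cong: image_cong)
  then show "setwise_stabilizer G phi L \<noteq> {}"
    unfolding setwise_stabilizer_def by blast
  fix g h assume g: "g \<in> setwise_stabilizer G phi L" and h: "h \<in> setwise_stabilizer G phi L"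
  then show "g \<otimes> h \<in> setwise_stabilizer G phi L"
    using image_mult unfolding setwise_stabilizer_def by auto
  have "phi (inv g) ` L = phi (inv g \<otimes> g) ` L"
    using g image_mult[of "inv g" g] unfolding setwise_stabilizer_def by auto
  also have "\<dots> = L" using g image_one unfolding setwise_stabilizer_def by simp
  finally show "inv g \<in> setwise_stabilizer G phi L"
    using g unfolding setwise_stabilizer_def by auto
qed (auto simp: setwise_stabilizer_def)

lemma aligned_image:
  assumes g: "g \<in> carrier G" and al: "aligned E V xs"
  shows "aligned E V (map (phi g) xs)"
proof -
  obtain a b where ab: "a \<in> V" "b \<in> V" "set xs \<subseteq> segment E a b"
    using al unfolding aligned_def by blast
  then have "set (map (phi g) xs) \<subseteq> segment E (phi g a) (phi g b)"
    using segment_image[OF g ab(1,2)] by auto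
  then show ?thesis unfolding aligned_def using action_in_V[OF g] ab by blast
qed

lemma aligned_image_iff:
  assumes g: "g \<in> carrier G" and xs: "set xs \<subseteq> V"
  shows "aligned E V (map (phi g) xs) \<longleftrightarrow> aligned E V xs"
proof
  assume "aligned E V (map (phi g) xs)"
  then have "aligned E V (map (phi (inv g)) (map (phi g) xs))" by (rule aligned_image[OF inv_closed[OF g]])
  moreover have "map (phi (inv g)) (map (phi g) xs) = xs"
    using xs action_inv_cancel[OF g] by (induct xs) auto
  ultimately show "aligned E V xs" by simp
qed (rule aligned_image[OF g])

end

locale line_action = tree_line V E l + tree_group_action V E G phi
  for V :: "'v set" and E :: "'v \<Rightarrow> 'v \<Rightarrow> bool" and l :: "int \<Rightarrow> 'v"
    and G :: "('g, 'b) monoid_scheme" (structure) and phi :: "'g \<Rightarrow> 'v \<Rightarrow> 'v" +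
  assumes no_inversions: "without_inversions G E phi"
    and segments_into_line: "\<forall>x\<in>V. \<forall>y\<in>V. \<exists>g\<in>carrier G. segment E (phi g x) (phi g y) \<subseteq> range l"
    and edges_transitive: "\<forall>i j. \<exists>h\<in>setwise_stabilizer G phi (range l).
               phi h ` {l i, l (i + 1)} = {l j, l (j + 1)}"
begin

abbreviation H :: "'g set" where
  "H \<equiv> setwise_stabilizer G phi (range l)"

lemma H_subgroup: "subgroup H G"
  using stabilizer_subgroup line_in_V by blast

lemma H_in_carrier: "h \<in> H \<Longrightarrow> h \<in> carrier G"
  and H_preserves_line: "h \<in> H \<Longrightarrow> phi h (l i) \<in> range l"
  unfolding setwise_stabilizer_def by blast+

lemma edge_realised_in_H:
  assumes k: "k \<in> carrier G" and p: "phi k (l a) = l p" and q: "phi k (l (a + 1)) = l q"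
  shows "\<exists>h\<in>H. phi h (l a) = l p \<and> phi h (l (a + 1)) = l q"
proof -
  have "E (l p) (l q)" using p q action_adjacent_iff[OF k line_in_V line_in_V] line_adjacent_succ by metis
  then have "\<bar>p - q\<bar> = 1" by (rule line_adjacent)
  then have "{l p, l q} = {l (min p q), l (min p q + 1)}" by (cases "p < q") auto
  then obtain h where h: "h \<in> H" "phi h ` {l a, l (a + 1)} = {l p, l q}"
    using edges_transitive by metis
  have hG: "h \<in> carrier G" using H_in_carrier[OF h(1)] .
  have "phi h (l a) \<noteq> phi h (l (a + 1))" using action_eq_iff[OF hG line_in_V line_in_V] by simp
  then consider "phi h (l a) = l p" "phi h (l (a + 1)) = l q"
    | "phi h (l a) = l q" "phi h (l (a + 1)) = l p"
    using h(2) by (auto simp: doubleton_eq_iff)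
  then show ?thesis
  proof cases
    case 1
    then show ?thesis using h(1) by blast
  next
    case 2
    \<comment> \<open>then \<open>inv h \<otimes> k\<close> inverts the edge \<open>{l a, l (a + 1)}\<close>\<close>
    have "phi (inv h) (l p) = l (a + 1)" "phi (inv h) (l q) = l a"
      using 2 action_inv_cancel[OF hG line_in_V] by metis+
    then have "phi (inv h \<otimes> k) (l a) = l (a + 1)" "phi (inv h \<otimes> k) (l (a + 1)) = l a"
      using p q action_mult[OF inv_closed[OF hG] k line_in_V] by simp_all
    then show ?thesis
      using no_inversions line_adjacent_succ[of a] inv_closed[OF hG] k
      unfolding without_inversions_def by blast
  qed
qed

lemma line_map_affine:
  assumes g: "g \<in> carrier G" and into: "\<And>i. i \<in> {a..b} \<Longrightarrow> phi g (l i) \<in> range l"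
  shows "\<exists>c d. \<forall>i\<in>{a..b}. phi g (l i) = l (c + d * i)"
proof -
  define \<psi> where "\<psi> i = inv_into UNIV l (phi g (l i))" for i
  define d where "d = \<psi> (a + 1) - \<psi> a"
  have \<psi>: "phi g (l i) = l (\<psi> i)" if "i \<in> {a..b}" for i
    using into[OF that] unfolding \<psi>_def by (simp add: f_inv_into_f)
  have "\<bar>\<psi> (i + 1) - \<psi> i\<bar> = 1" if "a \<le> i" "i < b" for i
  proof -
    have "E (phi g (l i)) (phi g (l (i + 1)))"
      using action_adjacent_iff[OF g line_in_V line_in_V] line_adjacent_succ by blast
    then have "E (l (\<psi> i)) (l (\<psi> (i + 1)))" using \<psi> that by simp
    then show ?thesis using line_adjacent by fastforce
  qed
  moreover have "inj_on \<psi> {a..b}"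
  proof (rule inj_onI)
    fix i j assume "i \<in> {a..b}" "j \<in> {a..b}" "\<psi> i = \<psi> j"
    then have "phi g (l i) = phi g (l j)" using \<psi> by simp
    then show "i = j" using action_eq_iff[OF g line_in_V line_in_V] by simp
  qed
  ultimately have affine: "\<psi> i = \<psi> a + d * (i - a)" if "i \<in> {a..b}" for i
    unfolding d_def by (rule int_unit_steps_affine[OF _ _ that])
  show ?thesis
  proof (intro exI ballI)
    fix i assume i: "i \<in> {a..b}"
    from affine[OF i] have "\<psi> i = (\<psi> a - d * a) + d * i" by (simp add: algebra_simps)
    then show "phi g (l i) = l ((\<psi> a - d * a) + d * i)" using \<psi>[OF i] by simp
  qed
qed

lemma vertex_realised_in_H:
  assumes k: "k \<in> carrier G" and a': "phi k (l a) = l a'"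
  shows "\<exists>h\<in>H. phi h (l a) = l a'"
proof (cases "phi k (l (a + 1)) \<in> range l")
  case True
  then show ?thesis using edge_realised_in_H[OF k a'] by blast
next
  case False
  define y where "y = phi k (l (a + 1))"
  have "E (l a') y"
    using a' action_adjacent_iff[OF k line_in_V line_in_V] line_adjacent_succ unfolding y_def by metis
  then have y: "y \<in> V" "y \<notin> range l" "E (l (a' - 1)) (l a')"
    using adjacent_in_V False line_adjacent_succ[of "a' - 1"] unfolding y_def by auto
  \<comment> \<open>Condition (i) moves the bent path \<open>l (a' - 1), l a', y\<close> into the line; the edges of this
    path at \<open>l a'\<close> and at \<open>l a\<close> are then realised in \<open>H\<close>, and the two elements combine.\<close>
  have path: "is_path E [l (a' - 1), l a', y] (l (a' - 1)) y"
    using \<open>E (l a') y\<close> y unfolding is_path_def by (auto simp: less_Suc_eq nth_Cons')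
  obtain g where g: "g \<in> carrier G" "segment E (phi g (l (a' - 1))) (phi g y) \<subseteq> range l"
    using segments_into_line line_in_V y(1) by blast
  have "phi g ` set [l (a' - 1), l a', y] = segment E (phi g (l (a' - 1))) (phi g y)"
    using segment_image[OF g(1) line_in_V y(1)] segment_path[OF line_in_V y(1) path] by metis
  then have "phi g ` set [l (a' - 1), l a', y] \<subseteq> range l" using g(2) by simp
  then obtain p q r where pqr: "phi g (l (a' - 1)) = l p" "phi g (l a') = l q" "phi g y = l r"
    by auto
  obtain h2 where h2: "h2 \<in> H" "phi h2 (l a') = l q"
    using edge_realised_in_H[OF g(1) pqr(1)] pqr(2) by auto
  obtain h1 where h1: "h1 \<in> H" "phi h1 (l a) = l q"
    using edge_realised_in_H[of "g \<otimes> k" a q r] g(1) k pqr a' action_mult line_in_V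
    unfolding y_def by auto
  have "inv h2 \<otimes> h1 \<in> H"
    using h1(1) h2(1) H_subgroup by (simp add: subgroup.m_closed subgroup.m_inv_closed)
  moreover have "phi (inv h2 \<otimes> h1) (l a) = l a'"
    using h1 h2 H_in_carrier action_mult[OF inv_closed] action_inv_cancel line_in_V by metis
  ultimately show ?thesis by blast
qed

lemma interval_realised_in_H:
  assumes k: "k \<in> carrier G" and ab: "a \<le> b"
    and into: "\<And>i. i \<in> {a..b} \<Longrightarrow> phi k (l i) \<in> range l"
  shows "\<exists>h\<in>H. \<forall>i\<in>{a..b}. phi h (l i) = phi k (l i)"
proof (cases "a = b")
  case True
  obtain a' where "phi k (l a) = l a'" using into[of a] ab by auto
  then show ?thesis using vertex_realised_in_H[OF k] True by auto
next
  case False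
  obtain p q where "phi k (l a) = l p" "phi k (l (a + 1)) = l q"
    using into[of a] into[of "a + 1"] ab False by auto
  then obtain h where h: "h \<in> H" "phi h (l a) = phi k (l a)" "phi h (l (a + 1)) = phi k (l (a + 1))"
    using edge_realised_in_H[OF k] by metis
  obtain c d where cd: "\<forall>i\<in>{a..b}. phi h (l i) = l (c + d * i)"
    using line_map_affine[OF H_in_carrier[OF h(1)]] H_preserves_line[OF h(1)] by metis
  obtain c' d' where cd': "\<forall>i\<in>{a..b}. phi k (l i) = l (c' + d' * i)"
    using line_map_affine[OF k into] by blast
  have "c + d * a = c' + d' * a" "c + d * (a + 1) = c' + d' * (a + 1)"
    using h(2,3) cd cd' ab False by auto
  then have "d = d'" by (simp add: algebra_simps)
  moreover from this \<open>c + d * a = c' + d' * a\<close> have "c = c'" by simp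
  ultimately show ?thesis using h(1) cd cd' by auto
qed

lemma finite_line_set_bounds:
  assumes fin: "finite S" and ne: "S \<noteq> {}" and S: "S \<subseteq> range l"
  obtains a b where "a \<le> b" "l a \<in> S" "l b \<in> S" "S \<subseteq> l ` {a..b}"
proof -
  define I where "I = l -` S"
  have I: "finite I" "I \<noteq> {}" "S = l ` I"
    using fin ne S finite_vimageI[OF fin line_inj] unfolding I_def by auto
  then have "Min I \<in> I" "Max I \<in> I" by simp_all
  show ?thesis
  proof
    show "Min I \<le> Max I" "l (Min I) \<in> S" "l (Max I) \<in> S"
      using I \<open>Min I \<in> I\<close> \<open>Max I \<in> I\<close> by auto
    have "I \<subseteq> {Min I..Max I}" using I by (simp add: subset_iff)
    then show "S \<subseteq> l ` {Min I..Max I}" using I(3) by (simp add: image_mono)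
  qed
qed

lemma line_set_aligned:
  assumes "set xs \<subseteq> range l" "xs \<noteq> []"
  shows "aligned E V xs"
proof -
  have "set xs \<noteq> {}" using assms(2) by simp
  then obtain a b where ab: "a \<le> b" "set xs \<subseteq> l ` {a..b}"
    using finite_line_set_bounds[OF finite_set _ assms(1)] by blast
  then have "set xs \<subseteq> segment E (l a) (l b)" using segment_line by simp
  then show ?thesis unfolding aligned_def using line_in_V by blast
qed

lemma line_set_realised_in_H:
  assumes fin: "finite S" and S: "S \<subseteq> range l" and k: "k \<in> carrier G"
    and kS: "phi k ` S \<subseteq> range l"
  shows "\<exists>h\<in>H. \<forall>x\<in>S. phi h x = phi k x"
proof (cases "S = {}")
  case True
  then show ?thesis using subgroup.one_closed[OF H_subgroup] by blast
next
  case False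
  obtain a b where ab: "a \<le> b" "l a \<in> S" "l b \<in> S" "S \<subseteq> l ` {a..b}"
    using finite_line_set_bounds[OF fin False S] by blast
  obtain a' b' where "phi k (l a) = l a'" "phi k (l b) = l b'" using ab kS by blast
  then have "phi k ` segment E (l a) (l b) \<subseteq> range l"
    using segment_image[OF k line_in_V line_in_V] segment_line by auto
  then have "\<forall>i\<in>{a..b}. phi k (l i) \<in> range l" using segment_line ab(1) by auto
  then obtain h where "h \<in> H" "\<forall>i\<in>{a..b}. phi h (l i) = phi k (l i)"
    using interval_realised_in_H[OF k ab(1)] by blast
  then show ?thesis using ab(4) by blast
qed

lemma aligned_moved_into_line:
  assumes "aligned E V xs"
  shows "\<exists>g\<in>carrier G. phi g ` set xs \<subseteq> range l"
proof -
  obtain a b where ab: "a \<in> V" "b \<in> V" "set xs \<subseteq> segment E a b"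
    using assms unfolding aligned_def by blast
  obtain g where g: "g \<in> carrier G" "segment E (phi g a) (phi g b) \<subseteq> range l"
    using segments_into_line ab by blast
  then have "phi g ` set xs \<subseteq> range l" using ab segment_image[OF g(1) ab(1,2)] by blast
  then show ?thesis using g(1) by blast
qed

lemma moved_into_line_aligned:
  assumes g: "g \<in> carrier G" and xs: "set xs \<subseteq> V" "xs \<noteq> []" and gxs: "phi g ` set xs \<subseteq> range l"
  shows "aligned E V xs"
  using line_set_aligned[of "map (phi g) xs"] aligned_image_iff[OF g xs(1)] gxs xs(2) by simp

lemma line_translates_agree:
  assumes F: "F \<in> linf_alt_inv n (range l) H phi" and xs: "xs \<in> tuples n V"
    and g1: "g1 \<in> carrier G" "phi g1 ` set xs \<subseteq> range l"
    and g2: "g2 \<in> carrier G" "phi g2 ` set xs \<subseteq> range l"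
  shows "F (map (phi g1) xs) = F (map (phi g2) xs)"
proof -
  define k where "k = g2 \<otimes> inv g1"
  have k: "k \<in> carrier G" unfolding k_def using g1 g2 by simp
  have xV: "set xs \<subseteq> V" using xs unfolding tuples_def by blast
  have k_g1: "map (phi k) (map (phi g1) xs) = map (phi g2) xs"
    using xV action_mult_inv_cancel[OF g1(1) g2(1)] unfolding k_def by (induct xs) auto
  obtain h where h: "h \<in> H" "\<forall>y\<in>set (map (phi g1) xs). phi h y = phi k y"
    using line_set_realised_in_H[of "set (map (phi g1) xs)" k] g1(2) g2(2) k k_g1
    by (metis finite_set set_map)
  then have h_g1: "map (phi h) (map (phi g1) xs) = map (phi g2) xs" using k_g1 by (metis map_eq_conv)
  have "map (phi g1) xs \<in> tuples n (range l)" using xs g1(2) unfolding tuples_def by auto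
  then have "F (map (phi h) (map (phi g1) xs)) = F (map (phi g1) xs)"
    using F h(1) unfolding linf_alt_inv_def invariant_def by blast
  then show ?thesis unfolding h_g1 by simp
qed

definition extend_from_line :: "nat \<Rightarrow> ('v list \<Rightarrow> real) \<Rightarrow> 'v list \<Rightarrow> real" where
  "extend_from_line n F xs = (if xs \<in> tuples n V \<and> aligned E V xs
     then F (map (phi (SOME g. g \<in> carrier G \<and> phi g ` set xs \<subseteq> range l)) xs) else 0)"

lemma extend_from_line_some:
  assumes "xs \<in> tuples n V" "aligned E V xs"
  shows "\<exists>g\<in>carrier G. phi g ` set xs \<subseteq> range l \<and> extend_from_line n F xs = F (map (phi g) xs)"
proof -
  let ?g = "SOME g. g \<in> carrier G \<and> phi g ` set xs \<subseteq> range l"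
  have "?g \<in> carrier G \<and> phi ?g ` set xs \<subseteq> range l"
    using someI_ex aligned_moved_into_line[OF assms(2)] by (metis (no_types, lifting))
  then show ?thesis using assms unfolding extend_from_line_def by auto
qed

lemma extend_from_line_eq:
  assumes F: "F \<in> linf_alt_inv n (range l) H phi" and xs: "xs \<in> tuples n V"
    and g: "g \<in> carrier G" "phi g ` set xs \<subseteq> range l"
  shows "extend_from_line n F xs = F (map (phi g) xs)"
proof -
  have "set xs \<subseteq> V" "xs \<noteq> []" using xs by (cases xs; simp add: tuples_def)+
  then have "aligned E V xs" using moved_into_line_aligned[OF g(1) _ _ g(2)] by blast
  then show ?thesis
    using extend_from_line_some[OF xs] line_translates_agree[OF F xs _ _ g] by metis
qed

lemma extend_from_line_alternating:
  assumes F: "F \<in> linf_alt_inv n (range l) H phi"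
  shows "alternating n V (extend_from_line n F)"
  unfolding alternating_iff_permute_list
proof (intro ballI allI impI)
  fix xs \<sigma> assume xs: "xs \<in> tuples n V" and \<sigma>: "\<sigma> permutes {..<Suc n}"
  then have \<sigma>': "\<sigma> permutes {..<length xs}" unfolding tuples_def by simp
  have same_set: "set (permute_list \<sigma> xs) = set xs" using set_permute_list[OF \<sigma>'] .
  have xs': "permute_list \<sigma> xs \<in> tuples n V" using permute_list_in_tuples[OF xs \<sigma>] .
  show "extend_from_line n F (permute_list \<sigma> xs) = of_int (sign \<sigma>) * extend_from_line n F xs"
  proof (cases "aligned E V xs")
    case True
    obtain g where g: "g \<in> carrier G" "phi g ` set xs \<subseteq> range l"
      using aligned_moved_into_line[OF True] by blast
    have gxs: "map (phi g) xs \<in> tuples n (range l)" using xs g(2) unfolding tuples_def by auto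
    have "extend_from_line n F (permute_list \<sigma> xs) = F (permute_list \<sigma> (map (phi g) xs))"
      using extend_from_line_eq[OF F xs' g(1)] g(2) same_set by (simp add: permute_list_map[OF \<sigma>'])
    also have "\<dots> = of_int (sign \<sigma>) * F (map (phi g) xs)"
      using F gxs \<sigma> unfolding linf_alt_inv_def alternating_iff_permute_list by blast
    also have "F (map (phi g) xs) = extend_from_line n F xs"
      using extend_from_line_eq[OF F xs g] by simp
    finally show ?thesis .
  next
    case False
    then show ?thesis using aligned_cong_set[OF same_set] unfolding extend_from_line_def by simp
  qed
qed

lemma extend_from_line_invariant:
  assumes F: "F \<in> linf_alt_inv n (range l) H phi"
  shows "invariant n V (carrier G) phi (extend_from_line n F)"
  unfolding invariant_def
proof (intro ballI)
  fix k xs assume k: "k \<in> carrier G" and xs: "xs \<in> tuples n V"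
  have xV: "set xs \<subseteq> V" using xs unfolding tuples_def by blast
  have kxs: "map (phi k) xs \<in> tuples n V" using xs action_in_V[OF k] unfolding tuples_def by auto
  show "extend_from_line n F (map (phi k) xs) = extend_from_line n F xs"
  proof (cases "aligned E V xs")
    case True
    obtain g where g: "g \<in> carrier G" "phi g ` set xs \<subseteq> range l"
      using aligned_moved_into_line[OF True] by blast
    have g_k: "map (phi (g \<otimes> inv k)) (map (phi k) xs) = map (phi g) xs"
      using xV action_mult_inv_cancel[OF k g(1)] by (induct xs) auto
    then have "phi (g \<otimes> inv k) ` set (map (phi k) xs) \<subseteq> range l" using g(2) by (metis set_map)
    then have "extend_from_line n F (map (phi k) xs) = F (map (phi (g \<otimes> inv k)) (map (phi k) xs))"
      using extend_from_line_eq[OF F kxs] g(1) k by simp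
    then have "extend_from_line n F (map (phi k) xs) = F (map (phi g) xs)" unfolding g_k .
    then show ?thesis using extend_from_line_eq[OF F xs g] by simp
  next
    case False
    then show ?thesis using aligned_image_iff[OF k xV] unfolding extend_from_line_def by simp
  qed
qed

lemma extend_from_line_mem:
  assumes F: "F \<in> linf_alt_inv n (range l) H phi"
  shows "extend_from_line n F \<in> linf_aligned_inv n V E (carrier G) phi"
proof -
  have "bounded_fun (extend_from_line n F)"
    unfolding extend_from_line_def
    by (rule bounded_fun_if_zero) (use F in \<open>simp add: linf_alt_inv_def\<close>)
  moreover have "\<forall>xs. xs \<notin> tuples n V \<longrightarrow> extend_from_line n F xs = 0"
    and "\<forall>xs\<in>tuples n V. extend_from_line n F xs \<noteq> 0 \<longrightarrow> aligned E V xs"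
    by (simp_all add: extend_from_line_def)
  ultimately show ?thesis
    using extend_from_line_alternating[OF F] extend_from_line_invariant[OF F]
    unfolding linf_aligned_inv_def by blast
qed

lemma restrict_extend_from_line:
  assumes F: "F \<in> linf_alt_inv n (range l) H phi"
  shows "restrict_tuples n (range l) (extend_from_line n F) = F"
proof
  fix ys show "restrict_tuples n (range l) (extend_from_line n F) ys = F ys"
  proof (cases "ys \<in> tuples n (range l)")
    case True
    then have ys: "ys \<in> tuples n V" using line_in_V unfolding tuples_def by auto
    then have "map (phi \<one>) ys = ys" using action_one unfolding tuples_def by (auto intro: map_idI)
    moreover from this have "phi \<one> ` set ys = set ys" by (metis set_map)
    ultimately show ?thesis
      using extend_from_line_eq[OF F ys one_closed] True unfolding restrict_tuples_def tuples_def
      by simp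
  next
    case False
    then show ?thesis using F unfolding restrict_tuples_def linf_alt_inv_def by simp
  qed
qed

lemma extend_restrict_tuples:
  assumes f: "f \<in> linf_aligned_inv n V E (carrier G) phi"
  shows "extend_from_line n (restrict_tuples n (range l) f) = f"
proof
  fix xs show "extend_from_line n (restrict_tuples n (range l) f) xs = f xs"
  proof (cases "xs \<in> tuples n V \<and> aligned E V xs")
    case True
    then obtain g where g: "g \<in> carrier G" "phi g ` set xs \<subseteq> range l"
      and "extend_from_line n (restrict_tuples n (range l) f) xs = restrict_tuples n (range l) f (map (phi g) xs)"
      using extend_from_line_some by blast
    moreover have "map (phi g) xs \<in> tuples n (range l)" using True g unfolding tuples_def by auto
    ultimately show ?thesis
      using f True unfolding restrict_tuples_def linf_aligned_inv_def invariant_def by simp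
  next
    case False
    then show ?thesis using f unfolding extend_from_line_def linf_aligned_inv_def by auto
  qed
qed

lemma restrict_tuples_mem:
  assumes f: "f \<in> linf_aligned_inv n V E (carrier G) phi"
  shows "restrict_tuples n (range l) f \<in> linf_alt_inv n (range l) H phi"
proof -
  have line_tuples: "tuples n (range l) \<subseteq> tuples n V" using line_in_V unfolding tuples_def by auto
  have "bounded_fun (restrict_tuples n (range l) f)"
    unfolding restrict_tuples_def
    by (rule bounded_fun_if_zero[where h = "\<lambda>x. x"]) (use f in \<open>simp add: linf_aligned_inv_def\<close>)
  moreover have "alternating n (range l) (restrict_tuples n (range l) f)"
    unfolding alternating_iff_permute_list
  proof (intro ballI allI impI)
    fix ys \<sigma> assume ys: "ys \<in> tuples n (range l)" and \<sigma>: "\<sigma> permutes {..<Suc n}"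
    have "f (permute_list \<sigma> ys) = of_int (sign \<sigma>) * f ys"
      using f ys \<sigma> line_tuples unfolding linf_aligned_inv_def alternating_iff_permute_list by blast
    then show "restrict_tuples n (range l) f (permute_list \<sigma> ys)
        = of_int (sign \<sigma>) * restrict_tuples n (range l) f ys"
      using ys permute_list_in_tuples[OF ys \<sigma>] unfolding restrict_tuples_def by simp
  qed
  moreover have "map (phi h) ys \<in> tuples n (range l)" if "h \<in> H" "ys \<in> tuples n (range l)" for h ys
    using H_preserves_line that unfolding tuples_def by auto
  ultimately show ?thesis
    using f line_tuples H_in_carrier
    unfolding linf_aligned_inv_def linf_alt_inv_def invariant_def restrict_tuples_def by auto
qed

lemma restrict_tuples_bij:
  "bij_betw (restrict_tuples n (range l)) (linf_aligned_inv n V E (carrier G) phi)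
     (linf_alt_inv n (range l) H phi)"
  by (rule bij_betw_byWitness[where f' = "extend_from_line n"])
    (auto simp: extend_restrict_tuples restrict_extend_from_line restrict_tuples_mem
       extend_from_line_mem)

end

theorem mainTheorem6:
  fixes G :: "('g, 'b) monoid_scheme" (structure)
    and V :: "'v set" and E :: "'v \<Rightarrow> 'v \<Rightarrow> bool"
    and phi :: "'g \<Rightarrow> 'v \<Rightarrow> 'v" and l :: "int \<Rightarrow> 'v" and n :: nat
  assumes tree: "is_tree V E"
    and lfr: "locally_finite_regular V E"
    and act: "tree_action G V E phi"
    and noinv: "without_inversions G E phi"
    and line: "geodesic_line V E l"
    and i: "\<forall>x\<in>V. \<forall>y\<in>V. \<exists>g\<in>carrier G. segment E (phi g x) (phi g y) \<subseteq> range l"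
    and ii: "\<forall>i j. \<exists>h\<in>setwise_stabilizer G phi (range l).
               phi h ` {l i, l (i + 1)} = {l j, l (j + 1)}"
  shows "(\<forall>f g (c::real). restrict_tuples n (range l) (\<lambda>xs. f xs + c * g xs) =
            (\<lambda>xs. restrict_tuples n (range l) f xs + c * restrict_tuples n (range l) g xs)) \<and>
         bij_betw (restrict_tuples n (range l))
           (linf_aligned_inv n V E (carrier G) phi)
           (linf_alt_inv n (range l) (setwise_stabilizer G phi (range l)) phi)"
proof
  show "\<forall>f g (c::real). restrict_tuples n (range l) (\<lambda>xs. f xs + c * g xs) =
      (\<lambda>xs. restrict_tuples n (range l) f xs + c * restrict_tuples n (range l) g xs)"
    by (simp add: restrict_tuples_def fun_eq_iff)
  have "group G" using act unfolding tree_action_def by blast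
  interpret line_action V E l G phi
    by (intro line_action.intro tree_line.intro tree_group_action.intro tree_graph.intro
        tree_line_axioms.intro tree_group_action_axioms.intro line_action_axioms.intro)
      (fact tree line \<open>group G\<close> act noinv i ii)+
  show "bij_betw (restrict_tuples n (range l)) (linf_aligned_inv n V E (carrier G) phi)
      (linf_alt_inv n (range l) (setwise_stabilizer G phi (range l)) phi)"
    by (rule restrict_tuples_bij)
qed

end
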